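(* There is a functionally Hausdorff, pseudocompact, first countable semigroup topology $\theta$ on the unit circle $\mathbb T=\{z\in\mathbb C:|z|=1\}$ (as a multiplicative group) which is not a group topology.
   Context: A semigroup topology on a group is a topology making the group multiplication continuous; a group topology additionally makes inversion continuous. A space is functionally Hausdorff if continuous real-valued functions separate its points. A space is pseudocompact if every locally finite family of nonempty open subsets is finite. *)

theory Defs
  imports "HOL-Analysis.Analysis"
begin

definition circle_group :: "complex set" where
  "circle_group = {z. cmod z = 1}"

definition semigroup_topology_on :: "complex set \<Rightarrow> complex topology \<Rightarrow> bool" where
  "semigroup_topology_on G X \<longleftrightarrow>
     topspace X = G \<and>
     continuous_map (prod_topology X X) X (\<lambda>(x, y). x * y)"

definition group_topology_on :: "complex set \<Rightarrow> complex topology \<Rightarrow> bool" where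
  "group_topology_on G X \<longleftrightarrow>
     semigroup_topology_on G X \<and> continuous_map X X inverse"

definition functionally_Hausdorff :: "'a topology \<Rightarrow> bool" where
  "functionally_Hausdorff X \<longleftrightarrow>
     (\<forall>x\<in>topspace X. \<forall>y\<in>topspace X. x \<noteq> y \<longrightarrow>
        (\<exists>f. continuous_map X euclideanreal f \<and> f x \<noteq> f y))"

definition pseudocompact :: "'a topology \<Rightarrow> bool" where
  "pseudocompact X \<longleftrightarrow>
     (\<forall>\<A>. (\<forall>U\<in>\<A>. openin X U \<and> U \<noteq> {}) \<and> locally_finite_in X \<A> \<longrightarrow> finite \<A>)"

end

theory Submission
  imports Defs
begin

text \<open>Fix an additive \<open>g : \<real> \<rightarrow> \<real>\<close> that is unbounded above on every neighbourhood of \<open>0\<close>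
  (a \<open>\<rat>\<close>-linear map killing \<open>1\<close> and sending an irrational number to \<open>1\<close>), and let the
  neighbourhoods of a point \<open>x\<close> of the circle be the sets of \<open>x \<cdot> cis t\<close> with \<open>t\<close> small and
  \<open>g t \<ge> 0\<close>. The cone \<open>{t. g t \<ge> 0}\<close> is closed under addition, so multiplication is
  continuous; it contains small \<open>t\<close> whose negatives it misses, so inversion is not. The topology
  is finer than the Euclidean one, hence functionally Hausdorff, and it is first countable.
  Since the cone is unbounded near \<open>0\<close>, every basic neighbourhood of \<open>x\<close> is dense in a
  Euclidean arc around \<open>x\<close>, and pseudocompactness follows from the compactness of the
  Euclidean circle.\<close>

lemma functionally_Hausdorff_if_continuous_injection:
  fixes f :: "'a \<Rightarrow> 'b :: metric_space"
  assumes f: "continuous_map X euclidean f" and inj: "inj_on f (topspace X)"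
  shows "functionally_Hausdorff X"
  unfolding functionally_Hausdorff_def
proof (intro ballI impI)
  fix x y assume "x \<in> topspace X" "y \<in> topspace X" "x \<noteq> y"
  have "continuous_map X euclideanreal (\<lambda>z. dist (f z) (f x))"
    using continuous_map_compose[OF f, of euclideanreal "\<lambda>w. dist w (f x)"]
    by (simp add: continuous_on_dist o_def)
  moreover have "dist (f x) (f x) \<noteq> dist (f y) (f x)"
    using inj \<open>x \<in> topspace X\<close> \<open>y \<in> topspace X\<close> \<open>x \<noteq> y\<close> by (auto dest: inj_onD)
  ultimately show "\<exists>h. continuous_map X euclideanreal h \<and> h x \<noteq> h y"
    by blast
qed

lemma pseudocompact_if_closures_of_nhds_are_nhds_in_compact:
  assumes "compact_space Y" and "topspace Y = topspace X"
    and nhd: "\<And>x V. openin X V \<Longrightarrow> x \<in> V \<Longrightarrow> \<exists>W. openin Y W \<and> x \<in> W \<and> W \<subseteq> X closure_of V"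
  shows "pseudocompact X"
  unfolding pseudocompact_def
proof (intro allI impI, elim conjE)
  fix \<A> assume \<A>: "\<forall>U\<in>\<A>. openin X U \<and> U \<noteq> {}" and "locally_finite_in X \<A>"
  then have "\<forall>x\<in>topspace X. \<exists>V. openin X V \<and> x \<in> V \<and> finite {U \<in> \<A>. U \<inter> V \<noteq> {}}"
    by (simp add: locally_finite_in_def)
  then obtain V where V: "\<forall>x\<in>topspace X. openin X (V x) \<and> x \<in> V x \<and> finite {U \<in> \<A>. U \<inter> V x \<noteq> {}}"
    by (rule bchoice[elim_format]) blast
  have "\<forall>x\<in>topspace X. \<exists>W. openin Y W \<and> x \<in> W \<and> W \<subseteq> X closure_of V x"
    using V nhd by blast
  then obtain W where W: "\<forall>x\<in>topspace X. openin Y (W x) \<and> x \<in> W x \<and> W x \<subseteq> X closure_of V x"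
    by (rule bchoice[elim_format]) blast
  have "(\<forall>U\<in>W ` topspace X. openin Y U) \<and> topspace X \<subseteq> \<Union>(W ` topspace X)"
    using W by blast
  then obtain F where F: "finite F" "F \<subseteq> W ` topspace X" "topspace X \<subseteq> \<Union>F"
    using \<open>compact_space Y\<close> unfolding compact_space_alt \<open>topspace Y = topspace X\<close>
    by (elim allE impE) blast+
  then obtain K where K: "finite K" "K \<subseteq> topspace X" "topspace X \<subseteq> (\<Union>x\<in>K. W x)"
    using finite_subset_image[OF F(1,2)] by blast
  have "\<A> \<subseteq> (\<Union>x\<in>K. {U \<in> \<A>. U \<inter> V x \<noteq> {}})"
  proof
    fix U assume "U \<in> \<A>"
    then obtain u where "openin X U" "u \<in> U"
      using \<A> by blast
    then obtain x where "x \<in> K" "u \<in> W x"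
      using K(3) openin_subset by blast
    then have "u \<in> X closure_of V x"
      using K(2) W by blast
    then have "U \<inter> V x \<noteq> {}"
      using \<open>openin X U\<close> \<open>u \<in> U\<close> by (auto simp: in_closure_of)
    then show "U \<in> (\<Union>x\<in>K. {U \<in> \<A>. U \<inter> V x \<noteq> {}})"
      using \<open>x \<in> K\<close> \<open>U \<in> \<A>\<close> by blast
  qed
  moreover have "finite (\<Union>x\<in>K. {U \<in> \<A>. U \<inter> V x \<noteq> {}})"
    using K(1,2) V by blast
  ultimately show "finite \<A>"
    by (rule finite_subset)
qed

lemma circle_group_eq_sphere: "circle_group = sphere 0 1"
  by (auto simp: circle_group_def)

lemma mult_mem_circle_group: "x \<in> circle_group \<Longrightarrow> y \<in> circle_group \<Longrightarrow> x * y \<in> circle_group"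
  by (simp add: circle_group_def norm_mult)

lemma cis_mem_circle_group: "cis t \<in> circle_group"
  by (simp add: circle_group_def)

lemma circle_group_near_point_mult_cis:
  assumes x: "x \<in> circle_group" and "d > 0"
  obtains r where "r > 0" "\<And>z. z \<in> circle_group \<Longrightarrow> dist z x < r \<Longrightarrow> \<exists>a. \<bar>a\<bar> < d \<and> z = x * cis a"
proof -
  have "isCont Arg 1"
    by (rule continuous_at_Arg) (auto simp: nonpos_Reals_def)
  then obtain r where "r > 0" and r: "\<And>w. dist w 1 < r \<Longrightarrow> \<bar>Arg w\<bar> < d"
    using \<open>d > 0\<close> unfolding continuous_at_eps_delta by (metis Arg_1 diff_zero dist_real_def)
  have "\<exists>a. \<bar>a\<bar> < d \<and> z = x * cis a" if z: "z \<in> circle_group" and "dist z x < r" for z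
  proof -
    have nx: "cmod x = 1" and nz: "cmod z = 1"
      using x z by (auto simp: circle_group_def)
    have "x \<noteq> 0"
      using nx by auto
    then have "z / x - 1 = (z - x) / x"
      by (simp add: field_simps)
    then have "dist (z / x) 1 = dist z x"
      by (simp add: dist_norm norm_divide nx)
    then have "\<bar>Arg (z / x)\<bar> < d"
      using r \<open>dist z x < r\<close> by simp
    moreover have "cmod (z / x) = 1"
      by (simp add: norm_divide nx nz)
    then have "cis (Arg (z / x)) = z / x"
      by (metis cis_Arg div_by_1 norm_eq_zero of_real_1 sgn_eq zero_neq_one)
    then have "x * cis (Arg (z / x)) = z"
      using \<open>x \<noteq> 0\<close> by simp
    ultimately show ?thesis
      by metis
  qed
  then show ?thesis
    using \<open>r > 0\<close> that by blast
qed

locale additive_unbounded_near_0 =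
  fixes g :: "real \<Rightarrow> real"
  assumes additive: "g (x + y) = g x + g y"
    and unbounded_near_0: "0 < e \<Longrightarrow> \<exists>s. \<bar>s\<bar> < e \<and> c \<le> g s"
begin

lemma zero [simp]: "g 0 = 0"
  using additive[of 0 0] by simp

lemma minus: "g (- x) = - g x"
  using additive[of x "- x"] by simp

definition pos_arc :: "complex \<Rightarrow> real \<Rightarrow> complex set" where
  "pos_arc x e = {x * cis t | t. \<bar>t\<bar> < e \<and> 0 \<le> g t}"

lemma pos_arc_mono: "e \<le> e' \<Longrightarrow> pos_arc x e \<subseteq> pos_arc x e'"
  by (force simp: pos_arc_def)

lemma centre_in_pos_arc: "0 < e \<Longrightarrow> x \<in> pos_arc x e"
  unfolding pos_arc_def by (rule CollectI, rule exI[of _ 0]) simp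

lemma pos_arc_subset_circle_group: "x \<in> circle_group \<Longrightarrow> pos_arc x e \<subseteq> circle_group"
  by (auto simp: pos_arc_def mult_mem_circle_group cis_mem_circle_group)

lemma mult_mem_pos_arc:
  assumes "a \<in> pos_arc x d" and "b \<in> pos_arc y e"
  shows "a * b \<in> pos_arc (x * y) (d + e)"
proof -
  obtain s t where "a = x * cis s" "\<bar>s\<bar> < d" "0 \<le> g s" "b = y * cis t" "\<bar>t\<bar> < e" "0 \<le> g t"
    using assms by (auto simp: pos_arc_def)
  then have "a * b = x * y * cis (s + t)" "\<bar>s + t\<bar> < d + e" "0 \<le> g (s + t)"
    by (auto simp: additive mult_ac simp flip: cis_mult)
  then show ?thesis
    unfolding pos_arc_def by blast
qed

lemma pos_arc_shift:
  assumes "\<bar>t\<bar> < e" and "0 \<le> g t"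
  shows "pos_arc (x * cis t) (e - \<bar>t\<bar>) \<subseteq> pos_arc x e"
proof
  fix w assume "w \<in> pos_arc (x * cis t) (e - \<bar>t\<bar>)"
  then obtain s where "w = x * cis t * cis s" "\<bar>s\<bar> < e - \<bar>t\<bar>" "0 \<le> g s"
    by (auto simp: pos_arc_def)
  then have "w = x * cis (t + s)" "\<bar>t + s\<bar> < e" "0 \<le> g (t + s)"
    using assms by (auto simp: additive mult.assoc simp flip: cis_mult)
  then show "w \<in> pos_arc x e"
    unfolding pos_arc_def by blast
qed

definition arc_open :: "complex set \<Rightarrow> bool" where
  "arc_open U \<longleftrightarrow> U \<subseteq> circle_group \<and> (\<forall>x\<in>U. \<exists>e>0. pos_arc x e \<subseteq> U)"

lemma istopology_arc_open: "istopology arc_open"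
  unfolding istopology_def
proof (intro conjI allI impI)
  fix S T assume "arc_open S" "arc_open T"
  show "arc_open (S \<inter> T)"
    unfolding arc_open_def
  proof (intro conjI ballI)
    fix x assume "x \<in> S \<inter> T"
    then obtain d e where "d > 0" "pos_arc x d \<subseteq> S" "e > 0" "pos_arc x e \<subseteq> T"
      using \<open>arc_open S\<close> \<open>arc_open T\<close> unfolding arc_open_def by blast
    moreover have "pos_arc x (min d e) \<subseteq> pos_arc x d" "pos_arc x (min d e) \<subseteq> pos_arc x e"
      by (simp_all add: pos_arc_mono)
    ultimately show "\<exists>e>0. pos_arc x e \<subseteq> S \<inter> T"
      by (intro exI[of _ "min d e"]) auto
  qed (use \<open>arc_open S\<close> in \<open>auto simp: arc_open_def\<close>)
next
  fix \<K> assume \<K>: "\<forall>K\<in>\<K>. arc_open K"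
  show "arc_open (\<Union>\<K>)"
    unfolding arc_open_def
  proof (intro conjI ballI)
    fix x assume "x \<in> \<Union>\<K>"
    then obtain K where "K \<in> \<K>" "x \<in> K"
      by blast
    then obtain e where "e > 0" "pos_arc x e \<subseteq> K"
      using \<K> unfolding arc_open_def by blast
    then show "\<exists>e>0. pos_arc x e \<subseteq> \<Union>\<K>"
      using \<open>K \<in> \<K>\<close> by blast
  qed (use \<K> in \<open>auto simp: arc_open_def\<close>)
qed

definition arc_topology :: "complex topology" where
  "arc_topology = topology arc_open"

lemma openin_arc_topology: "openin arc_topology U \<longleftrightarrow> arc_open U"
  unfolding arc_topology_def topology_inverse'[OF istopology_arc_open] ..

lemma topspace_arc_topology [simp]: "topspace arc_topology = circle_group"
proof -
  have "openin arc_topology circle_group"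
    using pos_arc_subset_circle_group by (auto simp: openin_arc_topology arc_open_def intro: exI[of _ 1])
  moreover have "arc_open (topspace arc_topology)"
    using openin_arc_topology openin_topspace by blast
  ultimately show ?thesis
    using openin_subset unfolding arc_open_def by blast
qed

lemma openin_pos_arc: "x \<in> circle_group \<Longrightarrow> openin arc_topology (pos_arc x e)"
  unfolding openin_arc_topology arc_open_def
proof (intro conjI ballI)
  fix y assume "y \<in> pos_arc x e"
  then obtain t where "y = x * cis t" "\<bar>t\<bar> < e" "0 \<le> g t"
    by (auto simp: pos_arc_def)
  then show "\<exists>d>0. pos_arc y d \<subseteq> pos_arc x e"
    using pos_arc_shift by (intro exI[of _ "e - \<bar>t\<bar>"]) auto
qed (rule pos_arc_subset_circle_group)

lemma continuous_map_arc_topology_mult: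
  "continuous_map (prod_topology arc_topology arc_topology) arc_topology (\<lambda>(x, y). x * y)"
  unfolding continuous_map_def topspace_prod_topology topspace_arc_topology
proof (intro conjI allI impI)
  show "(\<lambda>(x, y). x * y) \<in> circle_group \<times> circle_group \<rightarrow> circle_group"
    by (auto simp: mult_mem_circle_group)
  fix U assume U: "openin arc_topology U"
  let ?W = "{p \<in> circle_group \<times> circle_group. (\<lambda>(x, y). x * y) p \<in> U}"
  show "openin (prod_topology arc_topology arc_topology) ?W"
  proof (subst openin_subopen, intro ballI)
    fix p assume "p \<in> ?W"
    then obtain x y where p: "p = (x, y)" "x \<in> circle_group" "y \<in> circle_group" "x * y \<in> U"
      by auto
    then obtain e where "e > 0" "pos_arc (x * y) e \<subseteq> U"
      using U unfolding openin_arc_topology arc_open_def by blast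
    then have "pos_arc x (e/2) \<times> pos_arc y (e/2) \<subseteq> ?W"
      using mult_mem_pos_arc[of _ x "e/2" _ y "e/2"] pos_arc_subset_circle_group p by fastforce
    moreover have "openin (prod_topology arc_topology arc_topology) (pos_arc x (e/2) \<times> pos_arc y (e/2))"
      using p by (simp add: openin_prod_Times_iff openin_pos_arc)
    moreover have "p \<in> pos_arc x (e/2) \<times> pos_arc y (e/2)"
      using p \<open>e > 0\<close> by (simp add: centre_in_pos_arc)
    ultimately show "\<exists>T. openin (prod_topology arc_topology arc_topology) T \<and> p \<in> T \<and> T \<subseteq> ?W"
      by blast
  qed
qed

lemma continuous_map_arc_topology_euclidean: "continuous_map arc_topology euclidean (\<lambda>z. z)"
  unfolding continuous_map_def topspace_arc_topology
proof (intro conjI allI impI)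
  fix S :: "complex set" assume "openin euclidean S"
  show "openin arc_topology {x \<in> circle_group. x \<in> S}"
    unfolding openin_arc_topology arc_open_def
  proof (intro conjI ballI)
    fix x assume x: "x \<in> {x \<in> circle_group. x \<in> S}"
    have "continuous_on UNIV (\<lambda>t. x * cis t)"
      by (intro continuous_intros)
    then have "\<forall>B. open B \<longrightarrow> open ((\<lambda>t. x * cis t) -` B \<inter> UNIV)"
      using continuous_on_open_vimage[OF open_UNIV] by blast
    then have "open ((\<lambda>t. x * cis t) -` S)"
      using \<open>openin euclidean S\<close> by simp
    moreover have "0 \<in> (\<lambda>t. x * cis t) -` S"
      using x by simp
    ultimately obtain d where "d > 0" "ball 0 d \<subseteq> (\<lambda>t. x * cis t) -` S"
      by (rule openE)
    then have "pos_arc x d \<subseteq> {x \<in> circle_group. x \<in> S}"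
      using x pos_arc_subset_circle_group by (force simp: pos_arc_def)
    then show "\<exists>e>0. pos_arc x e \<subseteq> {x \<in> circle_group. x \<in> S}"
      using \<open>d > 0\<close> by blast
  qed auto
qed auto

lemma functionally_Hausdorff_arc_topology: "functionally_Hausdorff arc_topology"
  by (rule functionally_Hausdorff_if_continuous_injection[OF continuous_map_arc_topology_euclidean]) simp

lemma first_countable_arc_topology: "first_countable arc_topology"
  unfolding first_countable_def topspace_arc_topology
proof
  fix x assume x: "x \<in> circle_group"
  let ?\<B> = "range (\<lambda>n. pos_arc x (1 / Suc n))"
  have "\<exists>V\<in>?\<B>. x \<in> V \<and> V \<subseteq> U" if U: "openin arc_topology U" "x \<in> U" for U
  proof -
    obtain e where "e > 0" "pos_arc x e \<subseteq> U"
      using U unfolding openin_arc_topology arc_open_def by blast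
    moreover obtain n where "1 / Suc n < e"
      using \<open>e > 0\<close> by (metis inverse_eq_divide reals_Archimedean)
    ultimately show ?thesis
      using pos_arc_mono[of "1 / Suc n" e x] centre_in_pos_arc[of "1 / Suc n" x] by auto
  qed
  moreover have "\<forall>V\<in>?\<B>. openin arc_topology V"
    using x openin_pos_arc by blast
  moreover have "countable ?\<B>"
    by simp
  ultimately show "\<exists>\<B>. countable \<B> \<and> (\<forall>V\<in>\<B>. openin arc_topology V) \<and>
               (\<forall>U. openin arc_topology U \<and> x \<in> U \<longrightarrow> (\<exists>V\<in>\<B>. x \<in> V \<and> V \<subseteq> U))"
    by blast
qed

lemma not_continuous_map_arc_topology_inverse: "\<not> continuous_map arc_topology arc_topology inverse"
proof
  assume "continuous_map arc_topology arc_topology inverse"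
  moreover have one: "1 \<in> circle_group"
    by (simp add: circle_group_def)
  ultimately have "openin arc_topology {z \<in> circle_group. inverse z \<in> pos_arc 1 1}"
    using openin_pos_arc unfolding continuous_map_def by fastforce
  moreover have "1 \<in> {z \<in> circle_group. inverse z \<in> pos_arc 1 1}"
    using one centre_in_pos_arc[of 1 1] by simp
  ultimately obtain e where "e > 0" "pos_arc 1 e \<subseteq> {z \<in> circle_group. inverse z \<in> pos_arc 1 1}"
    unfolding openin_arc_topology arc_open_def by blast
  moreover obtain s where s: "\<bar>s\<bar> < min e 1" "1 \<le> g s"
    using unbounded_near_0[of "min e 1" 1] \<open>e > 0\<close> by auto
  ultimately have "cis (- s) \<in> pos_arc 1 1"
    by (force simp: pos_arc_def)
  then obtain t where t: "cis (- s) = cis t" "\<bar>t\<bar> < 1" "0 \<le> g t"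
    by (auto simp: pos_arc_def)
  moreover have "- s \<in> {-pi<..pi}" "t \<in> {-pi<..pi}"
    using s t(2) pi_gt3 by auto
  ultimately have "- s = t"
    by (metis Arg_cis)
  then have "g t = - g s"
    using minus[of s] by simp
  with s t show False
    by linarith
qed

lemma mult_cis_in_closure_pos_arc:
  assumes x: "x \<in> circle_group" and "\<bar>a\<bar> < d"
  shows "x * cis a \<in> arc_topology closure_of pos_arc x d"
  unfolding in_closure_of
proof (intro conjI allI impI)
  show "x * cis a \<in> topspace arc_topology"
    using x by (simp add: mult_mem_circle_group cis_mem_circle_group)
  fix U assume "x * cis a \<in> U \<and> openin arc_topology U"
  then obtain e where "e > 0" "pos_arc (x * cis a) e \<subseteq> U"
    unfolding openin_arc_topology arc_open_def by blast
  obtain s where s: "\<bar>s\<bar> < min e (d - \<bar>a\<bar>)" "max 0 (- g a) \<le> g s"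
    using unbounded_near_0[of "min e (d - \<bar>a\<bar>)" "max 0 (- g a)"] \<open>e > 0\<close> \<open>\<bar>a\<bar> < d\<close> by auto
  have "x * cis a * cis s \<in> pos_arc (x * cis a) e"
    using s unfolding pos_arc_def by force
  moreover have "x * cis a * cis s \<in> pos_arc x d"
    using s unfolding pos_arc_def
    by (intro CollectI exI[of _ "a + s"]) (auto simp: additive mult.assoc simp flip: cis_mult)
  ultimately show "\<exists>y. y \<in> pos_arc x d \<and> y \<in> U"
    using \<open>pos_arc (x * cis a) e \<subseteq> U\<close> by blast
qed

lemma pseudocompact_arc_topology: "pseudocompact arc_topology"
proof (rule pseudocompact_if_closures_of_nhds_are_nhds_in_compact)
  show "compact_space (top_of_set circle_group)"
    by (simp add: circle_group_eq_sphere compact_space_subtopology)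
  fix x V assume "openin arc_topology V" "x \<in> V"
  then obtain d where "d > 0" "pos_arc x d \<subseteq> V" and x: "x \<in> circle_group"
    unfolding openin_arc_topology arc_open_def by blast
  then obtain r where "r > 0" and r: "\<And>z. z \<in> circle_group \<Longrightarrow> dist z x < r \<Longrightarrow> \<exists>a. \<bar>a\<bar> < d \<and> z = x * cis a"
    using circle_group_near_point_mult_cis by metis
  have "circle_group \<inter> ball x r \<subseteq> arc_topology closure_of V"
  proof
    fix z assume "z \<in> circle_group \<inter> ball x r"
    then have "\<exists>a. \<bar>a\<bar> < d \<and> z = x * cis a"
      using r by (simp add: dist_commute)
    then obtain a where "\<bar>a\<bar> < d" "z = x * cis a"
      by blast
    then show "z \<in> arc_topology closure_of V"
      using mult_cis_in_closure_pos_arc[OF x] closure_of_mono[OF \<open>pos_arc x d \<subseteq> V\<close>] by blast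
  qed
  then show "\<exists>W. openin (top_of_set circle_group) W \<and> x \<in> W \<and> W \<subseteq> arc_topology closure_of V"
    using x \<open>r > 0\<close> by (intro exI[of _ "circle_group \<inter> ball x r"]) (auto simp: openin_open_Int)
qed simp

end

lemma additive_unbounded_near_0_exists: "\<exists>g. additive_unbounded_near_0 g"
proof -
  define scale :: "rat \<Rightarrow> real \<Rightarrow> real" where "scale q x = of_rat q * x" for q x
  interpret Q: vector_space scale
    by unfold_locales (auto simp: scale_def algebra_simps of_rat_add of_rat_mult)
  interpret Q2: vector_space_pair scale scale ..
  obtain t :: real where t: "t \<notin> \<rat>"
    using uncountable_UNIV_real countable_rat by (metis countable_subset subsetI)
  have span_1: "Q.span {1} = \<rat>"
    by (auto simp: Q.span_singleton scale_def Rats_def)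
  have "Q.independent {t, 1}"
    using t by (intro Q.independent_insertI) (auto simp: span_1 Q.independent_insert Q.independent_empty)
  moreover have "t \<noteq> 1"
    using t by auto
  ultimately obtain g where g: "Vector_Spaces.linear scale scale g" and g_t: "g t = 1" and g_1: "g 1 = 0"
    using Q2.linear_independent_extend[of "{t, 1}" "\<lambda>x. if x = 1 then 0 else 1"] by auto
  have add: "g (x + y) = g x + g y" for x y
    using g by (simp add: Vector_Spaces.linear_iff)
  have hom: "g (of_rat q * x) = of_rat q * g x" for q x
    using g by (simp add: Vector_Spaces.linear_iff scale_def)
  have "\<exists>s. \<bar>s\<bar> < e \<and> c \<le> g s" if "e > 0" for e c
  proof -
    let ?k = "of_int \<lceil>c\<rceil> :: real"
    obtain r where "r \<in> \<rat>" and r: "?k * t - e < r" "r < ?k * t + e"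
      using Rats_dense_in_real[of "?k * t - e" "?k * t + e"] \<open>e > 0\<close> by auto
    then obtain q where q: "r = of_rat q" by (auto simp: Rats_def)
    have "g (?k * t - r) = ?k"
      using add[of "?k * t" "of_rat (- q) * 1"] hom[of "of_int \<lceil>c\<rceil>" t] hom[of "- q" 1]
      by (simp add: q g_t g_1 of_rat_minus)
    moreover have "\<bar>?k * t - r\<bar> < e"
      using r by (simp add: abs_less_iff)
    ultimately show ?thesis
      by (metis le_of_int_ceiling)
  qed
  then show ?thesis
    using add unfolding additive_unbounded_near_0_def by blast
qed

theorem proposition7:
  shows "\<exists>\<theta> :: complex topology.
           semigroup_topology_on circle_group \<theta> \<and>
           functionally_Hausdorff \<theta> \<and> pseudocompact \<theta> \<and> first_countable \<theta> \<and>
           \<not> group_topology_on circle_group \<theta>"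
proof -
  obtain g where "additive_unbounded_near_0 g"
    using additive_unbounded_near_0_exists by blast
  then interpret additive_unbounded_near_0 g .
  have "semigroup_topology_on circle_group arc_topology"
    unfolding semigroup_topology_on_def using continuous_map_arc_topology_mult by simp
  moreover have "\<not> group_topology_on circle_group arc_topology"
    unfolding group_topology_on_def using not_continuous_map_arc_topology_inverse by simp
  ultimately show ?thesis
    using functionally_Hausdorff_arc_topology pseudocompact_arc_topology first_countable_arc_topology
    by blast
qed

end
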